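(* Let $\beta_1,\dots,\beta_N\in\mathbb R$ satisfy $(d-1)\sum_i\beta_i^2+(\sum_i\beta_i)^2=1$. Then for every $1\le i\le N$: (i) $\widetilde C_\beta\,\big(\omega_{(0,i)}\otimes I^{\otimes(N-1)}\big)=\frac1{(N-1)!}\sum_{a=1}^N\sum_{\sigma\in\Sigma_{a,i}}\beta_a\big((d-1)\beta_i+\sum_{b=1}^N\beta_b\big)\Pi_\sigma^\Gamma$; (ii) $\mathrm{Tr}\big[C_\beta\,(\omega_{(0,i)}\otimes I^{\otimes(N-1)})\big]=d\big((d-1)\beta_i+\sum_{j=1}^N\beta_j\big)^2$.
   Context: Fix $d\ge2$, $N\ge1$. Let $|\Omega\rangle=\sum_{i=1}^d|i\rangle\otimes|i\rangle$, $\omega=|\Omega\rangle\langle\Omega|$; tensor factors of $(\mathbb C^d)^{\otimes(N+1)}$ are labelled $0,\dots,N$ and $\omega_{(0,i)}\otimes I^{\otimes(N-1)}$ acts as $\omega$ on factors $0,i$ and identity elsewhere. For a permutation $\sigma$ of $\{0,\dots,N\}$, $\Pi_\sigma(v_0\otimes\cdots\otimes v_N)=v_{\sigma^{-1}(0)}\otimes\cdots\otimes v_{\sigma^{-1}(N)}$, $\Pi_\sigma^\Gamma$ is its partial transpose on factor $0$, and $\Sigma_{a,b}=\{\sigma:\sigma(0)=a,\sigma(b)=0\}$. $\widetilde C_\beta=\sum_{1\le a,b\le N}\sum_{\sigma\in\Sigma_{a,b}}\frac{\beta_a\beta_b}{(N-1)!}\Pi_\sigma^\Gamma$ and $C_\beta=\frac{d}{\binom{N+d-1}{N}}\frac{N+d-1}{N}\widetilde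 C_\beta$. *)

theory Defs
  imports Complex_Main "HOL-Combinatorics.Permutations"
begin

text \<open>Operators on (C^d)^{tensor (N+1)} as matrices indexed by computational basis
  states. A basis state is a function x with x k < d for k \<le> N (factor k) and x k = 0
  for k > N. Entry A x y is the matrix element <x|A|y>.\<close>

type_synonym op = "(nat \<Rightarrow> nat) \<Rightarrow> (nat \<Rightarrow> nat) \<Rightarrow> complex"

definition basis :: "nat \<Rightarrow> nat \<Rightarrow> (nat \<Rightarrow> nat) set" where
  "basis d N = {x. (\<forall>k\<le>N. x k < d) \<and> (\<forall>k>N. x k = 0)}"

definition opmul :: "nat \<Rightarrow> nat \<Rightarrow> op \<Rightarrow> op \<Rightarrow> op" where
  "opmul d N A B = (\<lambda>x y. \<Sum>z\<in>basis d N. A x z * B z y)"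

definition optrace :: "nat \<Rightarrow> nat \<Rightarrow> op \<Rightarrow> complex" where
  "optrace d N A = (\<Sum>x\<in>basis d N. A x x)"

text \<open>Pi_sigma maps basis vector |x> to |x o sigma^-1>, so <y|Pi_sigma|x> = 1 iff y (sigma k) = x k.\<close>
definition perm_op :: "(nat \<Rightarrow> nat) \<Rightarrow> op" where
  "perm_op \<sigma> = (\<lambda>y x. if (\<forall>k. y (\<sigma> k) = x k) then 1 else 0)"

definition ptrans :: "op \<Rightarrow> op" where
  "ptrans M = (\<lambda>x y. M (x(0 := y 0)) (y(0 := x 0)))"

text \<open>omega on factors 0,i tensor identity elsewhere; omega = |Omega><Omega|,
  |Omega> = sum_j |j>|j>.\<close>
definition omega_op :: "nat \<Rightarrow> op" where
  "omega_op i = (\<lambda>x y. if x 0 = x i \<and> y 0 = y i \<and> (\<forall>k. k \<noteq> 0 \<and> k \<noteq> i \<longrightarrow> x k = y k)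
                        then 1 else 0)"

definition Sigma_set :: "nat \<Rightarrow> nat \<Rightarrow> nat \<Rightarrow> (nat \<Rightarrow> nat) set" where
  "Sigma_set N a b = {\<sigma>. \<sigma> permutes {0..N} \<and> \<sigma> 0 = a \<and> \<sigma> b = 0}"

definition Ctilde :: "nat \<Rightarrow> (nat \<Rightarrow> real) \<Rightarrow> op" where
  "Ctilde N \<beta> = (\<lambda>x y. \<Sum>a\<in>{1..N}. \<Sum>b\<in>{1..N}. \<Sum>\<sigma>\<in>Sigma_set N a b.
      complex_of_real (\<beta> a * \<beta> b / fact (N - 1)) * ptrans (perm_op \<sigma>) x y)"

definition Cbeta :: "nat \<Rightarrow> nat \<Rightarrow> (nat \<Rightarrow> real) \<Rightarrow> op" where
  "Cbeta d N \<beta> = (\<lambda>x y. complex_of_real (real d / real ((N + d - 1) choose N)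
      * (real (N + d - 1) / real N)) * Ctilde N \<beta> x y)"

end

theory Submission
  imports Defs
begin

text \<open>
  (i) For \<open>\<sigma>\<close> in \<open>Sigma_set N a b\<close>, contracting \<open>\<Pi>\<^sub>\<sigma>\<^sup>\<Gamma>\<close> with \<open>\<omega>\<close> on
  factors \<open>0, i\<close> yields \<open>\<Pi>\<^sup>\<Gamma>\<close> of \<open>\<sigma> \<circ> (b i)\<close>, times \<open>d\<close> if \<open>b = i\<close> (a closed
  loop) and times \<open>1\<close> otherwise. Right composition with \<open>(b i)\<close> maps
  \<open>Sigma_set N a b\<close> bijectively onto \<open>Sigma_set N a i\<close>, so the sum over \<open>b\<close>
  collapses to the weight \<open>\<Sum>\<^sub>b \<beta> b \<cdot> (if b = i then d else 1) = (d - 1) \<beta> i + \<Sum>\<^sub>b \<beta> b\<close>.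

  (ii) Partial transposition does not change the diagonal, so \<open>Tr \<Pi>\<^sub>\<tau>\<^sup>\<Gamma>\<close> counts
  the colourings of \<open>{0..N}\<close> with \<open>d\<close> colours that are invariant under \<open>\<tau>\<close>.
  Writing a permutation of \<open>insert e A\<close> as \<open>(e b) \<circ> p\<close> with \<open>p\<close> a permutation of \<open>A\<close>
  multiplies this count by \<open>d\<close> if \<open>b = e\<close> and by \<open>1\<close> otherwise; hence the counts
  over all permutations of an \<open>n\<close>-set sum to the rising factorial \<open>d (d+1) \<cdots> (d+n-1)\<close>,
  and over \<open>Sigma_set N a i\<close> to \<open>(if a = i then d else 1)\<close> times the rising factorial
  of length \<open>N - 1\<close>. The prefactor of \<open>C\<^sub>\<beta>\<close> cancels that rising factorial down
  to \<open>d\<close>.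
\<close>

lemma sum_permutes_insert_fixed:
  assumes "finite A" "e \<notin> A" "b \<in> insert e A"
  shows "(\<Sum>\<sigma>\<in>{\<sigma>. \<sigma> permutes insert e A \<and> \<sigma> e = b}. G \<sigma>)
       = (\<Sum>p\<in>{p. p permutes A}. G (transpose e b \<circ> p))"
proof -
  have fin: "finite {\<sigma>. \<sigma> permutes insert e A}"
    using assms(1) by (simp add: finite_permutations)
  have fixes_e: "p e = e" if "p permutes A" for p
    using that assms(2) by (simp add: permutes_not_in)
  have "(\<Sum>\<sigma>\<in>{\<sigma>. \<sigma> permutes insert e A \<and> \<sigma> e = b}. G \<sigma>)
      = (\<Sum>\<sigma>\<in>{\<sigma>. \<sigma> permutes insert e A}. if \<sigma> e = b then G \<sigma> else 0)"
    using sum.inter_filter[OF fin, of G "\<lambda>\<sigma>. \<sigma> e = b"] by simp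
  also have "\<dots> = (\<Sum>c\<in>insert e A.
                     if c = b then (\<Sum>p\<in>{p. p permutes A}. G (transpose e c \<circ> p)) else 0)"
    unfolding sum_over_permutations_insert[OF assms(1,2)]
    by (intro sum.cong refl) (auto simp: fixes_e)
  also have "\<dots> = (\<Sum>p\<in>{p. p permutes A}. G (transpose e b \<circ> p))"
    using assms(1,3) by simp
  finally show ?thesis .
qed

definition basis_on :: "nat \<Rightarrow> nat set \<Rightarrow> (nat \<Rightarrow> nat) set" where
  "basis_on d A = {x. (\<forall>k\<in>A. x k < d) \<and> (\<forall>k. k \<notin> A \<longrightarrow> x k = 0)}"

lemma basis_on_empty: "basis_on d {} = {\<lambda>_. 0}"
  by (auto simp: basis_on_def)

lemma basis_on_insert:
  assumes "e \<notin> A"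
  shows "basis_on d (insert e A) = (\<lambda>(j, x). x(e := j)) ` ({..<d} \<times> basis_on d A)"
proof (intro equalityI subsetI)
  fix y assume "y \<in> basis_on d (insert e A)"
  then have "y e < d" "y(e := 0) \<in> basis_on d A"
    by (auto simp: basis_on_def)
  then show "y \<in> (\<lambda>(j, x). x(e := j)) ` ({..<d} \<times> basis_on d A)"
    by (intro image_eqI[where x = "(y e, y(e := 0))"]) auto
qed (auto simp: basis_on_def)

lemma sum_basis_on_insert:
  assumes "e \<notin> A"
  shows "(\<Sum>y\<in>basis_on d (insert e A). h y) = (\<Sum>j<d. \<Sum>x\<in>basis_on d A. h (x(e := j)))"
proof -
  have "inj_on (\<lambda>(j, x). x(e := j)) ({..<d} \<times> basis_on d A)"
  proof (rule inj_onI, clarsimp)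
    fix j x j' x' assume "x \<in> basis_on d A" "x' \<in> basis_on d A" "x(e := j) = x'(e := j')"
    then show "j = j' \<and> x = x'"
      using assms by (auto simp: basis_on_def fun_eq_iff split: if_splits) metis+
  qed
  then show ?thesis
    unfolding basis_on_insert[OF assms]
    by (simp add: sum.reindex sum.cartesian_product case_prod_beta')
qed

lemma finite_basis_on: "finite A \<Longrightarrow> finite (basis_on d A)"
  by (induction A rule: finite_induct) (simp_all add: basis_on_empty basis_on_insert)

text \<open>For a permutation \<open>\<sigma>\<close> of \<open>A\<close> this is \<open>d\<close> to the number of cycles of \<open>\<sigma>\<close>.\<close>

definition invariant_count :: "nat \<Rightarrow> nat set \<Rightarrow> (nat \<Rightarrow> nat) \<Rightarrow> nat" where
  "invariant_count d A \<sigma> = card {x \<in> basis_on d A. \<forall>k\<in>A. x (\<sigma> k) = x k}"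

lemma invariant_count_eq_sum:
  "finite A \<Longrightarrow>
    invariant_count d A \<sigma> = (\<Sum>x\<in>basis_on d A. if \<forall>k\<in>A. x (\<sigma> k) = x k then 1 else 0)"
  unfolding invariant_count_def by (simp add: finite_basis_on sum.inter_filter[symmetric])

lemma invariant_transpose_comp_iff:
  assumes "e \<notin> A" "p permutes A"
  shows "(\<forall>k\<in>insert e A. (x(e := j)) ((transpose e b \<circ> p) k) = (x(e := j)) k)
     \<longleftrightarrow> (b = e \<or> j = x b) \<and> (\<forall>k\<in>A. x (p k) = x k)"
proof -
  have pe: "p e = e" and pA: "\<And>k. k \<in> A \<Longrightarrow> p k \<in> A \<and> p k \<noteq> e"
    using assms by (auto simp: permutes_not_in permutes_in_image)
  have at_e: "(x(e := j)) ((transpose e b \<circ> p) e) = (x(e := j)) e \<longleftrightarrow> b = e \<or> j = x b"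
    using pe by auto
  have on_A: "(x(e := j)) ((transpose e b \<circ> p) k) = (x(e := j)) k \<longleftrightarrow> x (p k) = x k"
    if "k \<in> A" "b = e \<or> j = x b" for k
    using that pA[of k] assms(1) by (auto simp: transpose_def)
  show ?thesis
    using at_e on_A by blast
qed

lemma invariant_count_transpose_comp:
  assumes "finite A" "e \<notin> A" "p permutes A" "b \<in> insert e A"
  shows "invariant_count d (insert e A) (transpose e b \<circ> p)
       = (if b = e then d else 1) * invariant_count d A p"
proof -
  let ?inv = "\<lambda>x. \<forall>k\<in>A. x (p k) = x k"
  have "invariant_count d (insert e A) (transpose e b \<circ> p)
      = (\<Sum>x\<in>basis_on d A. \<Sum>j<d. if (b = e \<or> j = x b) \<and> ?inv x then 1 else 0)"
    unfolding invariant_count_eq_sum[OF finite.insertI[OF assms(1)]]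
      sum_basis_on_insert[OF assms(2)] invariant_transpose_comp_iff[OF assms(2,3)]
    by (rule sum.swap)
  also have "\<dots> = (\<Sum>x\<in>basis_on d A. (if b = e then d else 1) * (if ?inv x then 1 else 0))"
  proof (rule sum.cong[OF refl])
    fix x assume "x \<in> basis_on d A"
    then have "b \<noteq> e \<Longrightarrow> x b < d"
      using assms(4) by (auto simp: basis_on_def)
    then show "(\<Sum>j<d. if (b = e \<or> j = x b) \<and> ?inv x then 1 else 0)
             = (if b = e then d else 1) * (if ?inv x then 1 else 0)"
      by (auto simp: sum.delta')
  qed
  finally show ?thesis
    using assms(1) by (simp add: invariant_count_eq_sum sum_distrib_left)
qed

lemma sum_invariant_count_permutes:
  "finite A \<Longrightarrow> (\<Sum>p | p permutes A. invariant_count d A p) = pochhammer d (card A)"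
proof (induction A rule: finite_induct)
  case empty
  then show ?case
    by (simp add: invariant_count_def basis_on_empty)
next
  case (insert e A)
  have "(\<Sum>p | p permutes insert e A. invariant_count d (insert e A) p)
      = (\<Sum>b\<in>insert e A. (if b = e then d else 1) * pochhammer d (card A))"
    using insert
    by (simp add: sum_over_permutations_insert invariant_count_transpose_comp
        flip: sum_distrib_left)
  also have "\<dots> = (\<Sum>b\<in>insert e A. (if b = e then d else 1)) * pochhammer d (card A)"
    by (simp add: sum_distrib_right)
  also have "(\<Sum>b\<in>insert e A. (if b = e then d else 1)) = d + card A"
    using insert(1,2) by (simp add: sum.If_cases Int_absorb2 subset_Compl_singleton)
  finally show ?case
    using insert(1,2) by (simp add: pochhammer_Suc algebra_simps)
qed

lemma sum_invariant_count_permutes_fixed: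
  assumes "finite A" "e \<notin> A" "b \<in> insert e A"
  shows "(\<Sum>\<sigma> | \<sigma> permutes insert e A \<and> \<sigma> e = b. invariant_count d (insert e A) \<sigma>)
       = (if b = e then d else 1) * pochhammer d (card A)"
  using assms
  by (simp add: sum_permutes_insert_fixed invariant_count_transpose_comp sum_invariant_count_permutes
      flip: sum_distrib_left)

lemma sum_invariant_count_Sigma_set:
  assumes a: "a \<in> {1..N}" and i: "i \<in> {1..N}"
  shows "(\<Sum>\<tau>\<in>Sigma_set N a i. invariant_count d {0..N} \<tau>)
       = (if a = i then d else 1) * pochhammer d (N - 1)"
proof -
  have range: "{0..N} = insert 0 {1..N}" "{1..N} = insert i ({1..N} - {i})"
    using i by auto
  have fin: "finite {\<sigma>. \<sigma> permutes insert 0 {1..N} \<and> \<sigma> 0 = a}" "finite {p. p permutes {1..N}}"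
    by (auto simp: finite_permutations)
  have "(\<Sum>\<tau>\<in>Sigma_set N a i. invariant_count d {0..N} \<tau>)
      = (\<Sum>\<sigma> | \<sigma> permutes insert 0 {1..N} \<and> \<sigma> 0 = a.
           if \<sigma> i = 0 then invariant_count d (insert 0 {1..N}) \<sigma> else 0)"
    unfolding sum.inter_filter[OF fin(1), symmetric] Sigma_set_def range(1)
    by (rule sum.cong) auto
  also have "\<dots> = (\<Sum>p | p permutes {1..N}. if p i = a then invariant_count d {1..N} p else 0)"
  proof -
    have shift: "(transpose 0 a \<circ> p) i = 0 \<longleftrightarrow> p i = a"
      "invariant_count d (insert 0 {1..N}) (transpose 0 a \<circ> p) = invariant_count d {1..N} p"
      if "p permutes {1..N}" for p
      using that a i permutes_in_image[OF that, of i]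
      by (auto simp: invariant_count_transpose_comp transpose_def)
    then show ?thesis
      using a by (subst sum_permutes_insert_fixed)
        (auto intro!: sum.cong simp: shift simp del: One_nat_def)
  qed
  also have "\<dots> = (\<Sum>p | p permutes insert i ({1..N} - {i}) \<and> p i = a.
                     invariant_count d (insert i ({1..N} - {i})) p)"
    unfolding sum.inter_filter[OF fin(2), symmetric] range(2)[symmetric] by simp
  also have "\<dots> = (if a = i then d else 1) * pochhammer d (N - 1)"
    using a i by (subst sum_invariant_count_permutes_fixed) auto
  finally show ?thesis .
qed

lemma basis_eq_basis_on: "basis d N = basis_on d {0..N}"
  unfolding basis_def basis_on_def by auto

lemma finite_basis: "finite (basis d N)"
  unfolding basis_eq_basis_on by (simp add: finite_basis_on)

lemma ptrans_perm_op_eq: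
  assumes "inj \<sigma>" "\<sigma> b = 0" "b \<noteq> 0"
  shows "ptrans (perm_op \<sigma>) x z
       = (if z 0 = z b \<and> (\<forall>k. k \<noteq> b \<longrightarrow> x (\<sigma> k) = (z(0 := x 0)) k) then 1 else 0)"
proof -
  have "\<sigma> k = 0 \<longleftrightarrow> k = b" for k
    using assms(1,2) by (metis injD)
  then have "(\<forall>k. (x(0 := z 0)) (\<sigma> k) = (z(0 := x 0)) k)
         \<longleftrightarrow> z 0 = z b \<and> (\<forall>k. k \<noteq> b \<longrightarrow> x (\<sigma> k) = (z(0 := x 0)) k)"
    using assms(3) by (metis fun_upd_other fun_upd_same)
  then show ?thesis
    unfolding ptrans_def perm_op_def by simp
qed

lemma sum_mult_omega_op:
  assumes y: "y \<in> basis d N" and i: "i \<in> {1..N}"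
  shows "(\<Sum>z\<in>basis d N. f z * omega_op i z y)
       = (if y 0 = y i then (\<Sum>j<d. f (y(0 := j, i := j))) else 0)"
proof (cases "y 0 = y i")
  case True
  let ?z = "\<lambda>j. y(0 := j, i := j)"
  have i0: "i \<noteq> 0"
    using i by simp
  have "f z * omega_op i z y = (if z \<in> range ?z then f z else 0)" for z
    using True i0 unfolding omega_op_def by (auto simp: fun_eq_iff)
  then have "(\<Sum>z\<in>basis d N. f z * omega_op i z y) = (\<Sum>z\<in>basis d N \<inter> range ?z. f z)"
    by (simp add: sum.inter_restrict[OF finite_basis])
  also have "basis d N \<inter> range ?z = ?z ` {..<d}"
    using y i i0 by (auto simp: basis_def)
  also have "(\<Sum>z\<in>?z ` {..<d}. f z) = (\<Sum>j<d. f (?z j))"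
    by (intro sum.reindex_cong[where l = ?z] inj_onI) (auto dest: fun_cong[where x = i])
  finally show ?thesis
    using True by simp
qed (simp add: omega_op_def)

lemma ptrans_perm_op_fun_upd_pair:
  assumes "inj \<sigma>" "\<sigma> b = 0" "b \<noteq> 0" "i \<noteq> 0" "y 0 = y i"
  shows "ptrans (perm_op \<sigma>) x (y(0 := j, i := j))
       = (if b = i \<or> j = y b then ptrans (perm_op (\<sigma> \<circ> transpose b i)) x y else 0)"
proof -
  let ?\<tau> = "\<sigma> \<circ> transpose b i" and ?z = "y(0 := j, i := j)"
  have \<tau>: "ptrans (perm_op ?\<tau>) x y
      = (if y 0 = y i \<and> (\<forall>k. k \<noteq> i \<longrightarrow> x (?\<tau> k) = (y(0 := x 0)) k) then 1 else 0)"
    using ptrans_perm_op_eq[of ?\<tau> i] assms by (simp add: inj_compose)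
  show ?thesis
  proof (cases "b = i")
    case True
    then show ?thesis
      using assms unfolding \<tau> by (subst ptrans_perm_op_eq[OF assms(1-3)]) auto
  next
    case False
    have "?z(0 := x 0) = y(0 := x 0, i := j)"
      using assms(4) by (simp add: fun_eq_iff)
    moreover have "?z 0 = ?z b \<longleftrightarrow> j = y b"
      using False assms(3) by simp
    ultimately have lhs: "ptrans (perm_op \<sigma>) x ?z
        = (if j = y b \<and> (\<forall>k. k \<noteq> b \<longrightarrow> x (\<sigma> k) = (y(0 := x 0, i := j)) k) then 1 else 0)"
      unfolding ptrans_perm_op_eq[OF assms(1-3)] by simp
    have iff: "(\<forall>k. k \<noteq> b \<longrightarrow> x (\<sigma> k) = (y(0 := x 0, i := y b)) k)
        \<longleftrightarrow> (\<forall>k. k \<noteq> i \<longrightarrow> x (?\<tau> k) = (y(0 := x 0)) k)"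
      using False assms(3) by (auto simp: transpose_def)
    show ?thesis
    proof (cases "j = y b")
      case True
      then show ?thesis
        unfolding lhs \<tau> by (simp only: True iff assms(5) simp_thms if_True)
    qed (simp add: lhs False)
  qed
qed

lemma sum_ptrans_perm_op_mult_omega_op:
  assumes \<sigma>: "\<sigma> permutes {0..N}" "\<sigma> b = 0" and b: "b \<in> {1..N}" and i: "i \<in> {1..N}"
    and y: "y \<in> basis d N"
  shows "(\<Sum>z\<in>basis d N. ptrans (perm_op \<sigma>) x z * omega_op i z y)
       = (if b = i then of_nat d else 1) * ptrans (perm_op (\<sigma> \<circ> transpose b i)) x y"
proof (cases "y 0 = y i")
  case True
  have "y b < d"
    using y b by (auto simp: basis_def)
  with True show ?thesis
    using permutes_inj[OF \<sigma>(1)] \<sigma>(2) b i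
    by (simp add: sum_mult_omega_op[OF y i] ptrans_perm_op_fun_upd_pair)
next
  case False
  then show ?thesis
    using ptrans_perm_op_eq[of "\<sigma> \<circ> transpose b i" i] permutes_inj[OF \<sigma>(1)] \<sigma>(2) i
    by (simp add: sum_mult_omega_op[OF y i] inj_compose)
qed

lemma bij_betw_comp_transpose_Sigma_set:
  assumes "b \<in> {1..N}" "i \<in> {1..N}"
  shows "bij_betw (\<lambda>\<sigma>. \<sigma> \<circ> transpose b i) (Sigma_set N a b) (Sigma_set N a i)"
proof (rule bij_betw_byWitness[where f' = "\<lambda>\<tau>. \<tau> \<circ> transpose b i"])
  show "(\<lambda>\<sigma>. \<sigma> \<circ> transpose b i) ` Sigma_set N a b \<subseteq> Sigma_set N a i"
    and "(\<lambda>\<tau>. \<tau> \<circ> transpose b i) ` Sigma_set N a i \<subseteq> Sigma_set N a b"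
    using assms by (auto simp: Sigma_set_def intro!: permutes_compose permutes_swap_id)
qed (simp_all add: comp_assoc)

lemma sum_scale_one_term:
  fixes \<beta> :: "'a \<Rightarrow> 'b::comm_ring_1"
  assumes "finite A" "i \<in> A"
  shows "(\<Sum>b\<in>A. \<beta> b * (if b = i then c else 1)) = (c - 1) * \<beta> i + sum \<beta> A"
proof -
  have "(\<Sum>b\<in>A. \<beta> b * (if b = i then c else 1))
      = (\<Sum>b\<in>A. \<beta> b + (if b = i then (c - 1) * \<beta> i else 0))"
    by (rule sum.cong) (auto simp: algebra_simps)
  then show ?thesis
    using assms by (simp add: sum.distrib)
qed

lemma opmul_Ctilde_omega_op:
  assumes i: "i \<in> {1..N}" and y: "y \<in> basis d N"
  shows "opmul d N (Ctilde N \<beta>) (omega_op i) x y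
       = (\<Sum>a\<in>{1..N}. \<Sum>\<sigma>\<in>Sigma_set N a i.
            complex_of_real (\<beta> a * ((real d - 1) * \<beta> i + (\<Sum>b\<in>{1..N}. \<beta> b)) / fact (N - 1))
            * ptrans (perm_op \<sigma>) x y)"
proof -
  define c where "c a b = complex_of_real (\<beta> a * \<beta> b / fact (N - 1))" for a b
  define w where "w b = (if b = i then of_nat d else 1 :: complex)" for b
  define S where "S a = (\<Sum>\<tau>\<in>Sigma_set N a i. ptrans (perm_op \<tau>) x y)" for a
  have "opmul d N (Ctilde N \<beta>) (omega_op i) x y
      = (\<Sum>a\<in>{1..N}. \<Sum>b\<in>{1..N}. \<Sum>\<sigma>\<in>Sigma_set N a b.
           c a b * (\<Sum>z\<in>basis d N. ptrans (perm_op \<sigma>) x z * omega_op i z y))"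
    unfolding opmul_def Ctilde_def c_def
    by (simp add: sum_distrib_left sum_distrib_right mult.assoc sum.swap[where A = "basis d N"])
  also have "\<dots> = (\<Sum>a\<in>{1..N}. \<Sum>b\<in>{1..N}. \<Sum>\<sigma>\<in>Sigma_set N a b.
                     c a b * w b * ptrans (perm_op (\<sigma> \<circ> transpose b i)) x y)"
    using i y
    by (intro sum.cong refl)
      (auto simp: Sigma_set_def w_def sum_ptrans_perm_op_mult_omega_op)
  also have "\<dots> = (\<Sum>a\<in>{1..N}. \<Sum>b\<in>{1..N}. c a b * w b * S a)"
  proof (intro sum.cong refl)
    fix a b assume "b \<in> {1..N}"
    from sum.reindex_bij_betw[OF bij_betw_comp_transpose_Sigma_set[OF this i],
        of "\<lambda>\<tau>. c a b * w b * ptrans (perm_op \<tau>) x y"]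
    show "(\<Sum>\<sigma>\<in>Sigma_set N a b. c a b * w b * ptrans (perm_op (\<sigma> \<circ> transpose b i)) x y)
        = c a b * w b * S a"
      unfolding S_def by (simp add: sum_distrib_left)
  qed
  also have "\<dots> = (\<Sum>a\<in>{1..N}. (\<Sum>b\<in>{1..N}. c a b * w b) * S a)"
    by (simp add: sum_distrib_right)
  also have "\<dots> = (\<Sum>a\<in>{1..N}. complex_of_real (\<beta> a * ((real d - 1) * \<beta> i + (\<Sum>b\<in>{1..N}. \<beta> b))
                     / fact (N - 1)) * S a)"
  proof (rule sum.cong[OF refl])
    fix a
    have "(\<Sum>b\<in>{1..N}. c a b * w b)
        = complex_of_real (\<Sum>b\<in>{1..N}. \<beta> a / fact (N - 1) * (\<beta> b * (if b = i then real d else 1)))"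
      unfolding c_def w_def by (auto simp: mult_ac intro!: sum.cong)
    then show "(\<Sum>b\<in>{1..N}. c a b * w b) * S a
        = complex_of_real (\<beta> a * ((real d - 1) * \<beta> i + (\<Sum>b\<in>{1..N}. \<beta> b)) / fact (N - 1)) * S a"
      by (simp only: sum_scale_one_term[OF finite_atLeastAtMost i] flip: sum_distrib_left) simp
  qed
  finally show ?thesis
    unfolding S_def by (simp add: sum_distrib_left)
qed

lemma trace_ptrans_perm_op:
  assumes "\<tau> permutes {0..N}"
  shows "(\<Sum>x\<in>basis d N. ptrans (perm_op \<tau>) x x) = of_nat (invariant_count d {0..N} \<tau>)"
proof -
  have "ptrans (perm_op \<tau>) x x = of_nat (if \<forall>k\<in>{0..N}. x (\<tau> k) = x k then 1 else 0)" for x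
    using assms unfolding ptrans_def fun_upd_triv perm_op_def by (auto simp: permutes_not_in)
  then show ?thesis
    by (simp only: invariant_count_eq_sum[OF finite_atLeastAtMost] basis_eq_basis_on of_nat_sum)
qed

lemma Cbeta_prefactor_pochhammer:
  assumes "d \<ge> 1" "N \<ge> 1"
  shows "real d / real ((N + d - 1) choose N) * (real (N + d - 1) / real N)
           * real (pochhammer d (N - 1)) / fact (N - 1) = real d"
proof -
  obtain n where N: "N = Suc n"
    using assms(2) by (cases N) auto
  define P where "P = pochhammer (real d) n"
  define r where "r = real (N + d - 1)"
  have "real ((N + d - 1) choose N) = pochhammer (real d) N / fact N"
    using assms by (simp add: binomial_gbinomial gbinomial_pochhammer')
  also have "\<dots> = P * r / (real N * fact n)"
    using assms by (simp add: N P_def r_def pochhammer_Suc)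
  finally have binomial: "real ((N + d - 1) choose N) = P * r / (real N * fact n)" .
  have "P > 0" "r > 0" "real N > 0"
    using assms by (auto simp: P_def r_def pochhammer_pos)
  moreover have "N - 1 = n"
    using N by simp
  ultimately show ?thesis
    unfolding binomial r_def[symmetric]
    by (simp add: P_def[symmetric] pochhammer_of_nat[symmetric] field_simps)
qed

lemma optrace_opmul_Ctilde_omega_op:
  assumes i: "i \<in> {1..N}"
  shows "optrace d N (opmul d N (Ctilde N \<beta>) (omega_op i))
       = complex_of_real (real (pochhammer d (N - 1)) / fact (N - 1)
           * ((real d - 1) * \<beta> i + (\<Sum>b\<in>{1..N}. \<beta> b))\<^sup>2)"
proof -
  define K where "K = (real d - 1) * \<beta> i + (\<Sum>b\<in>{1..N}. \<beta> b)"
  define c where "c a = complex_of_real (\<beta> a * K / fact (N - 1))" for a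
  have "optrace d N (opmul d N (Ctilde N \<beta>) (omega_op i))
      = (\<Sum>x\<in>basis d N. \<Sum>a\<in>{1..N}. \<Sum>\<sigma>\<in>Sigma_set N a i. c a * ptrans (perm_op \<sigma>) x x)"
    unfolding optrace_def c_def K_def by (intro sum.cong refl) (simp add: opmul_Ctilde_omega_op[OF i])
  also have "\<dots> = (\<Sum>a\<in>{1..N}. c a * (\<Sum>\<sigma>\<in>Sigma_set N a i. \<Sum>x\<in>basis d N. ptrans (perm_op \<sigma>) x x))"
    by (simp add: sum_distrib_left sum.swap[where A = "basis d N"])
  also have "\<dots> = (\<Sum>a\<in>{1..N}. c a * of_nat ((if a = i then d else 1) * pochhammer d (N - 1)))"
  proof (intro sum.cong refl arg_cong[where f = "\<lambda>t. c _ * t"])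
    fix a assume a: "a \<in> {1..N}"
    have "(\<Sum>\<sigma>\<in>Sigma_set N a i. \<Sum>x\<in>basis d N. ptrans (perm_op \<sigma>) x x)
        = of_nat (\<Sum>\<sigma>\<in>Sigma_set N a i. invariant_count d {0..N} \<sigma>)"
      unfolding of_nat_sum by (intro sum.cong refl) (simp add: Sigma_set_def trace_ptrans_perm_op)
    then show "(\<Sum>\<sigma>\<in>Sigma_set N a i. \<Sum>x\<in>basis d N. ptrans (perm_op \<sigma>) x x)
        = of_nat ((if a = i then d else 1) * pochhammer d (N - 1))"
      by (simp only: sum_invariant_count_Sigma_set[OF a i])
  qed
  also have "\<dots> = complex_of_real (real (pochhammer d (N - 1)) / fact (N - 1) * K
                    * (\<Sum>a\<in>{1..N}. \<beta> a * (if a = i then real d else 1)))"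
    unfolding c_def by (auto simp: sum_distrib_left mult_ac intro!: sum.cong)
  finally show ?thesis
    unfolding sum_scale_one_term[OF finite_atLeastAtMost i] K_def[symmetric]
    by (simp add: power2_eq_square mult_ac)
qed

theorem mainTheorem14:
  fixes d N i :: nat and \<beta> :: "nat \<Rightarrow> real"
  assumes "d \<ge> 2" and "N \<ge> 1"
    and "(real d - 1) * (\<Sum>j\<in>{1..N}. (\<beta> j)\<^sup>2) + (\<Sum>j\<in>{1..N}. \<beta> j)\<^sup>2 = 1"
    and "i \<in> {1..N}"
  shows "(\<forall>x\<in>basis d N. \<forall>y\<in>basis d N.
            opmul d N (Ctilde N \<beta>) (omega_op i) x y
          = (\<Sum>a\<in>{1..N}. \<Sum>\<sigma>\<in>Sigma_set N a i.
               complex_of_real (\<beta> a * ((real d - 1) * \<beta> i + (\<Sum>b\<in>{1..N}. \<beta> b)) / fact (N - 1))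
               * ptrans (perm_op \<sigma>) x y))
      \<and> optrace d N (opmul d N (Cbeta d N \<beta>) (omega_op i))
          = complex_of_real (real d * ((real d - 1) * \<beta> i + (\<Sum>j\<in>{1..N}. \<beta> j))\<^sup>2)"
proof -
  define coef where "coef = real d / real ((N + d - 1) choose N) * (real (N + d - 1) / real N)"
  have "optrace d N (opmul d N (Cbeta d N \<beta>) (omega_op i))
      = complex_of_real coef * optrace d N (opmul d N (Ctilde N \<beta>) (omega_op i))"
    unfolding optrace_def opmul_def Cbeta_def coef_def by (simp add: sum_distrib_left mult.assoc)
  also have "\<dots> = complex_of_real (coef * real (pochhammer d (N - 1)) / fact (N - 1)
                    * ((real d - 1) * \<beta> i + (\<Sum>j\<in>{1..N}. \<beta> j))\<^sup>2)"
    by (simp add: optrace_opmul_Ctilde_omega_op[OF assms(4)])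
  also have "coef * real (pochhammer d (N - 1)) / fact (N - 1) = real d"
    using Cbeta_prefactor_pochhammer[of d N] assms(1,2) by (simp add: coef_def)
  finally show ?thesis
    using opmul_Ctilde_omega_op[OF assms(4)] by blast
qed

end
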